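(* Let $U,W$ be smooth on $\mathbb R^d$ with $\nu(dx)=e^{-W}dx$ and $\mu(dx)=e^{-(U+W)}dx$ probability measures, and assume $\nu$ satisfies a weighted Poincaré inequality with weight $\omega$ and constant $C_{P,\omega}(\nu)$. Suppose there exists $\varepsilon>0$ such that $s:=\sup_xC_{P,\omega}(\nu)\frac{1+\varepsilon}{4}|\nabla U(x)|^2\omega^2(x)<1$. Then $\mu$ satisfies a weighted Poincaré inequality with weight $\omega$ and $C_{P,\omega}(\mu)\le\frac{(1+\varepsilon^{-1})C_{P,\omega}(\nu)}{1-s}$.
   Context: A probability measure $\mu$ satisfies a weighted Poincaré inequality with weight $\omega\ge0$ and constant $C_{P,\omega}(\mu)$ if for all smooth $f$, $\mathrm{Var}_\mu(f)\le C_{P,\omega}(\mu)\int|\nabla f|^2\omega^2d\mu$. *)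

theory Defs
  imports "HOL-Analysis.Analysis" "HOL-Probability.Probability"
begin

text \<open>Smooth (C-infinity) real-valued functions on a Euclidean space: f belongs to a
  family of everywhere Frechet-differentiable functions that is closed under taking
  partial derivatives along the basis directions. (Differentiability implies
  continuity, so all iterated partial derivatives exist and are continuous.)\<close>
definition smooth :: "('a::euclidean_space \<Rightarrow> real) \<Rightarrow> bool" where
  "smooth f \<longleftrightarrow> (\<exists>F. f \<in> F \<and>
     (\<forall>g\<in>F. (\<forall>x. g differentiable (at x)) \<and>
        (\<forall>b\<in>Basis. (\<lambda>x. frechet_derivative g (at x) b) \<in> F)))"

definition grad :: "('a::euclidean_space \<Rightarrow> real) \<Rightarrow> 'a \<Rightarrow> 'a" where
  "grad f x = (\<Sum>b\<in>Basis. frechet_derivative f (at x) b *\<^sub>R b)"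

text \<open>Variance of f under M, as an extended nonnegative real (infinite if f is not
  square integrable).\<close>
definition Var :: "'a measure \<Rightarrow> ('a \<Rightarrow> real) \<Rightarrow> ennreal" where
  "Var M f = (\<integral>\<^sup>+ x. ennreal ((f x - (\<integral> y. f y \<partial>M))\<^sup>2) \<partial>M)"

definition weighted_poincare :: "'a::euclidean_space measure \<Rightarrow> ('a \<Rightarrow> real) \<Rightarrow> real \<Rightarrow> bool" where
  "weighted_poincare M w C \<longleftrightarrow>
     (\<forall>f. smooth f \<longrightarrow>
        Var M f \<le> ennreal C * (\<integral>\<^sup>+ x. ennreal ((norm (grad f x))\<^sup>2 * (w x)\<^sup>2) \<partial>M))"

end

theory Submission
  imports Defs
begin

text \<open>Conjugation by the density reduces the inequality for \<open>\<mu> = exp(-U) \<nu>\<close> to the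
  one for \<open>\<nu>\<close>. For smooth \<open>g\<close> put \<open>h = (g - c) exp(-U/2)\<close>, with \<open>c\<close> chosen so that
  \<open>h\<close> has \<open>\<nu>\<close>-mean zero. Then \<open>Var\<^sub>\<nu> h = \<integral>(g - c)\<^sup>2 d\<mu>\<close> and
  \<open>grad h = exp(-U/2) (grad g - (g - c) grad U / 2)\<close>, so the Poincare inequality for \<open>\<nu>\<close>
  and Young's inequality \<open>|a - b|\<^sup>2 \<le> (1 + 1/\<epsilon>) |a|\<^sup>2 + (1 + \<epsilon>) |b|\<^sup>2\<close> give
  \<open>\<integral>(g - c)\<^sup>2 d\<mu> \<le> (1 + 1/\<epsilon>) C \<integral>|grad g|\<^sup>2 w\<^sup>2 d\<mu> + s \<integral>(g - c)\<^sup>2 d\<mu>\<close>; the last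
  term is absorbed because \<open>s < 1\<close>. Absorption needs \<open>\<integral>(g - c)\<^sup>2 d\<mu> < \<infinity>\<close>, so this is
  done for bounded \<open>g\<close>. A general \<open>f\<close> is approximated by the bounded smooth functions
  \<open>f exp(-f\<^sup>2/N)\<close>, whose gradients are dominated by \<open>grad f\<close>; their centres stay
  bounded, and Fatou's lemma along a convergent subsequence of centres gives the
  inequality for \<open>f\<close>.\<close>

lemma
  assumes "smooth f"
  shows smooth_differentiable: "f differentiable (at x)"
    and smooth_partial_derivative: "b \<in> Basis \<Longrightarrow> smooth (\<lambda>x. frechet_derivative f (at x) b)"
  using assms unfolding smooth_def by blast+

lemma smooth_coinduct:
  fixes G :: "('a::euclidean_space \<Rightarrow> real) set"
  assumes "\<And>g x. g \<in> G \<Longrightarrow> g differentiable (at x)"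
    and "\<And>g b. g \<in> G \<Longrightarrow> b \<in> Basis \<Longrightarrow>
           (\<lambda>x. frechet_derivative g (at x) b) \<in> G \<or> smooth (\<lambda>x. frechet_derivative g (at x) b)"
    and "f \<in> G"
  shows "smooth f"
  unfolding smooth_def
proof (intro exI[of _ "G \<union> Collect smooth"] conjI ballI allI)
  show "f \<in> G \<union> Collect smooth" using assms(3) by simp
next
  fix g :: "'a \<Rightarrow> real" and x assume "g \<in> G \<union> Collect smooth"
  then show "g differentiable (at x)" using assms(1) smooth_differentiable by auto
next
  fix g :: "'a \<Rightarrow> real" and b :: 'a assume "g \<in> G \<union> Collect smooth" "b \<in> Basis"
  then show "(\<lambda>x. frechet_derivative g (at x) b) \<in> G \<union> Collect smooth"
    using assms(2) smooth_partial_derivative by auto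
qed

lemma frechet_derivative_eqI: "(f has_derivative D) (at x) \<Longrightarrow> frechet_derivative f (at x) b = D b"
  by (metis frechet_derivative_at)

lemma smooth_has_derivative: "smooth f \<Longrightarrow> (f has_derivative frechet_derivative f (at x)) (at x)"
  using frechet_derivative_works smooth_differentiable by blast

lemma smooth_const: "smooth (\<lambda>x. c)"
proof (rule smooth_coinduct[where G = "range (\<lambda>c x. c)"])
  fix g :: "'a \<Rightarrow> real" and b :: 'a assume "g \<in> range (\<lambda>c x. c)"
  then obtain c where g: "g = (\<lambda>x. c)" by blast
  have "frechet_derivative g (at x) b = 0" for x
    unfolding g by (rule frechet_derivative_eqI) (rule has_derivative_const)
  then show "(\<lambda>x. frechet_derivative g (at x) b) \<in> range (\<lambda>c x. c) \<or>
      smooth (\<lambda>x. frechet_derivative g (at x) b)"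
    by auto
qed auto

lemma smooth_add:
  assumes "smooth f" "smooth g"
  shows "smooth (\<lambda>x. f x + g x)"
proof (rule smooth_coinduct[where G = "{(\<lambda>x. f x + g x) | f g. smooth f \<and> smooth g}"])
  fix h :: "'a \<Rightarrow> real" and b :: 'a and x
  assume "h \<in> {(\<lambda>x. f x + g x) | f g. smooth f \<and> smooth g}"
  then obtain f g where h: "h = (\<lambda>x. f x + g x)" and fg: "smooth f" "smooth g" by blast
  show "h differentiable (at x)"
    unfolding h using fg by (intro differentiable_add) (auto intro: smooth_differentiable)
  assume b: "b \<in> Basis"
  have "frechet_derivative h (at x) b = frechet_derivative f (at x) b + frechet_derivative g (at x) b" for x
    unfolding h by (rule frechet_derivative_eqI, rule has_derivative_add)
      (use fg smooth_has_derivative in auto)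
  then show "(\<lambda>x. frechet_derivative h (at x) b) \<in> {(\<lambda>x. f x + g x) | f g. smooth f \<and> smooth g} \<or>
      smooth (\<lambda>x. frechet_derivative h (at x) b)"
    by (intro disjI1 CollectI exI[of _ "\<lambda>x. frechet_derivative f (at x) b"]
        exI[of _ "\<lambda>x. frechet_derivative g (at x) b"])
      (use fg smooth_partial_derivative[OF _ b] in auto)
qed (use assms in auto)

text \<open>Products of two smooth functions are not closed under partial derivatives, but finite
  sums of such products are.\<close>
inductive_set sums_of_smooth_products :: "('a::euclidean_space \<Rightarrow> real) set" where
  product: "smooth f \<Longrightarrow> smooth g \<Longrightarrow> (\<lambda>x. f x * g x) \<in> sums_of_smooth_products"
| sum: "p \<in> sums_of_smooth_products \<Longrightarrow> q \<in> sums_of_smooth_products \<Longrightarrow>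
    (\<lambda>x. p x + q x) \<in> sums_of_smooth_products"

lemma sums_of_smooth_products_differentiable:
  "p \<in> sums_of_smooth_products \<Longrightarrow> p differentiable (at x)"
  by (induction p rule: sums_of_smooth_products.induct)
    (auto intro!: differentiable_add differentiable_mult simp: smooth_differentiable)

lemma sums_of_smooth_products_partial_derivative:
  "p \<in> sums_of_smooth_products \<Longrightarrow> b \<in> Basis \<Longrightarrow>
    (\<lambda>x. frechet_derivative p (at x) b) \<in> sums_of_smooth_products"
proof (induction p rule: sums_of_smooth_products.induct)
  case (product f g)
  have "(\<lambda>x. frechet_derivative (\<lambda>x. f x * g x) (at x) b) =
      (\<lambda>x. f x * frechet_derivative g (at x) b + frechet_derivative f (at x) b * g x)"
    by (rule ext, rule frechet_derivative_eqI, rule has_derivative_mult)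
      (use product smooth_has_derivative in auto)
  then show ?case
    using product smooth_partial_derivative by (auto intro!: sums_of_smooth_products.intros)
next
  case (sum p q)
  have "(\<lambda>x. frechet_derivative (\<lambda>x. p x + q x) (at x) b) =
      (\<lambda>x. frechet_derivative p (at x) b + frechet_derivative q (at x) b)"
    by (rule ext, rule frechet_derivative_eqI, rule has_derivative_add)
      (use sum sums_of_smooth_products_differentiable frechet_derivative_works in auto)
  then show ?case using sum by (auto intro!: sums_of_smooth_products.intros)
qed

lemma smooth_mult: "smooth f \<Longrightarrow> smooth g \<Longrightarrow> smooth (\<lambda>x. f x * g x)"
  by (rule smooth_coinduct[where G = sums_of_smooth_products])
    (use sums_of_smooth_products_differentiable sums_of_smooth_products_partial_derivative
      sums_of_smooth_products.product in auto)

lemma smooth_exp: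
  assumes "smooth f"
  shows "smooth (\<lambda>x. exp (f x))"
proof -
  let ?G = "{(\<lambda>x. exp (f x) * g x) | f g. smooth f \<and> smooth g}"
  have "smooth (\<lambda>x. exp (f x) * 1)"
  proof (rule smooth_coinduct[where G = ?G])
    fix h :: "'a \<Rightarrow> real" and b :: 'a and x assume "h \<in> ?G"
    then obtain f g where h: "h = (\<lambda>x. exp (f x) * g x)" and fg: "smooth f" "smooth g" by blast
    have Dh: "(h has_derivative (\<lambda>v. exp (f x) * frechet_derivative g (at x) v +
        frechet_derivative f (at x) v * exp (f x) * g x)) (at x)" for x
      unfolding h using has_derivative_mult[OF has_derivative_exp smooth_has_derivative[OF fg(2)]]
        smooth_has_derivative[OF fg(1)] by (simp add: mult.assoc)
    then show "h differentiable (at x)" by (rule differentiableI)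
    assume b: "b \<in> Basis"
    have "(\<lambda>x. frechet_derivative h (at x) b) =
        (\<lambda>x. exp (f x) * (frechet_derivative g (at x) b + frechet_derivative f (at x) b * g x))"
      using frechet_derivative_eqI[OF Dh] by (auto simp: algebra_simps)
    moreover have "smooth (\<lambda>x. frechet_derivative g (at x) b + frechet_derivative f (at x) b * g x)"
      using fg b by (intro smooth_add smooth_mult smooth_partial_derivative)
    ultimately show "(\<lambda>x. frechet_derivative h (at x) b) \<in> ?G \<or> smooth (\<lambda>x. frechet_derivative h (at x) b)"
      by (intro disjI1 CollectI exI[of _ f] exI[of _ "\<lambda>x. frechet_derivative g (at x) b +
          frechet_derivative f (at x) b * g x"]) (use fg in auto)
  qed (intro CollectI exI[of _ f] exI[of _ "\<lambda>_. 1"], use assms smooth_const in auto)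
  then show ?thesis by simp
qed

lemma smooth_cmult: "smooth f \<Longrightarrow> smooth (\<lambda>x. c * f x)"
  using smooth_mult[OF smooth_const] by blast

lemma smooth_diff: "smooth f \<Longrightarrow> smooth g \<Longrightarrow> smooth (\<lambda>x. f x - g x)"
  using smooth_add[of f "\<lambda>x. (-1) * g x"] smooth_cmult[of g "-1"] by simp

lemma grad_eqI:
  assumes "(f has_derivative (\<lambda>v. G \<bullet> v)) (at x)"
  shows "grad f x = G"
  unfolding grad_def using frechet_derivative_eqI[OF assms] by (simp add: euclidean_representation)

lemma has_derivative_grad:
  assumes "f differentiable (at x)"
  shows "(f has_derivative (\<lambda>v. grad f x \<bullet> v)) (at x)"
proof -
  let ?D = "frechet_derivative f (at x)"
  have D: "(f has_derivative ?D) (at x)" using assms frechet_derivative_works by blast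
  have "?D v = grad f x \<bullet> v" for v
  proof -
    have "?D v = ?D (\<Sum>b\<in>Basis. (v \<bullet> b) *\<^sub>R b)" by (simp add: euclidean_representation)
    also have "\<dots> = (\<Sum>b\<in>Basis. (v \<bullet> b) * ?D b)"
      using has_derivative_linear[OF D] by (simp add: linear_sum linear_scale)
    also have "\<dots> = grad f x \<bullet> v"
      unfolding grad_def by (simp add: inner_sum_left inner_sum_right inner_commute[of _ v] mult.commute)
    finally show ?thesis .
  qed
  then have "?D = (\<lambda>v. grad f x \<bullet> v)" by blast
  with D show ?thesis by simp
qed

lemma grad_compose:
  assumes "(\<phi> has_real_derivative D) (at (f x))" "f differentiable (at x)"
  shows "grad (\<lambda>x. \<phi> (f x)) x = D *\<^sub>R grad f x"
  by (rule grad_eqI, rule has_derivative_eq_rhs,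
      rule has_derivative_compose[OF has_derivative_grad[OF assms(2)]
        has_field_derivative_imp_has_derivative[OF assms(1)]])
    (simp add: fun_eq_iff mult.commute)

lemma continuous_on_grad: "smooth f \<Longrightarrow> continuous_on UNIV (grad f)"
  unfolding grad_def[abs_def]
  by (intro continuous_intros continuous_at_imp_continuous_on ballI
      differentiable_imp_continuous_within smooth_differentiable smooth_partial_derivative)

lemma borel_measurable_smooth: "smooth f \<Longrightarrow> f \<in> borel_measurable borel"
  by (intro borel_measurable_continuous_onI continuous_at_imp_continuous_on ballI
      differentiable_imp_continuous_within smooth_differentiable)

lemma borel_measurable_grad: "smooth f \<Longrightarrow> grad f \<in> borel_measurable borel"
  by (rule borel_measurable_continuous_onI, rule continuous_on_grad)

lemma Young_power2_add:
  fixes x y e :: real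
  assumes "e > 0"
  shows "(x + y)\<^sup>2 \<le> (1 + 1/e) * x\<^sup>2 + (1 + e) * y\<^sup>2"
proof -
  have "e * ((1 + 1/e) * x\<^sup>2 + (1 + e) * y\<^sup>2) - e * (x + y)\<^sup>2 = (x - e * y)\<^sup>2"
    using assms by (simp add: field_simps power2_eq_square)
  then have "e * (x + y)\<^sup>2 \<le> e * ((1 + 1/e) * x\<^sup>2 + (1 + e) * y\<^sup>2)"
    by (metis diff_ge_0_iff_ge zero_le_power2)
  then show ?thesis using assms by simp
qed

lemma Young_norm_diff:
  fixes a b :: "'a::real_normed_vector" and e :: real
  assumes "e > 0"
  shows "(norm (a - b))\<^sup>2 \<le> (1 + 1/e) * (norm a)\<^sup>2 + (1 + e) * (norm b)\<^sup>2"
  using power_mono[OF norm_triangle_ineq4 norm_ge_zero, of a b 2] Young_power2_add[OF assms]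
  by (rule order_trans)

definition damp :: "real \<Rightarrow> real \<Rightarrow> real" where
  "damp N t = t * exp (- t\<^sup>2 / N)"

lemma abs_damp_le: "0 \<le> N \<Longrightarrow> \<bar>damp N t\<bar> \<le> \<bar>t\<bar>"
  by (simp add: damp_def abs_mult mult_left_le)

lemma abs_damp_le_bound:
  assumes "1 \<le> N"
  shows "\<bar>damp N t\<bar> \<le> N"
proof -
  have "\<bar>t\<bar> \<le> N + t\<^sup>2"
    using assms zero_le_power2[of "\<bar>t\<bar> - 1/2"] by (simp add: power2_eq_square algebra_simps)
  also have "\<dots> = N * (1 + t\<^sup>2 / N)" using assms by (simp add: field_simps)
  also have "\<dots> \<le> N * exp (t\<^sup>2 / N)" using assms exp_ge_add_one_self[of "t\<^sup>2 / N"] by simp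
  finally show ?thesis using assms by (simp add: damp_def abs_mult exp_minus field_simps)
qed

lemma damp_has_real_derivative:
  "N \<noteq> 0 \<Longrightarrow> (damp N has_real_derivative (1 - 2 * t\<^sup>2 / N) * exp (- t\<^sup>2 / N)) (at t)"
  unfolding damp_def[abs_def]
  by (auto intro!: derivative_eq_intros simp: field_simps power2_eq_square)

lemma abs_damp_derivative_le:
  fixes t N :: real
  assumes "0 < N"
  shows "\<bar>(1 - 2 * t\<^sup>2 / N) * exp (- t\<^sup>2 / N)\<bar> \<le> 1"
proof -
  define u where "u = t\<^sup>2 / N"
  have u: "0 \<le> u" unfolding u_def using assms by simp
  have "(1 + u/2)\<^sup>2 \<le> (exp (u/2))\<^sup>2"
    using u exp_ge_add_one_self[of "u/2"] by (intro power_mono) auto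
  also have "\<dots> = exp u" by (simp add: exp_double[symmetric])
  finally have "2 * u - 1 \<le> exp u"
    using zero_le_power2[of "u/2 - 1"] by (simp add: power2_eq_square algebra_simps)
  then have "\<bar>1 - 2 * u\<bar> \<le> exp u" using u exp_ge_add_one_self[of u] by linarith
  then show ?thesis by (simp add: u_def abs_mult exp_minus field_simps)
qed

lemma damp_tendsto: "(\<lambda>n. damp (real n + 1) t) \<longlonglongrightarrow> t"
proof -
  have "(\<lambda>n. - t\<^sup>2 / real (Suc n)) \<longlonglongrightarrow> 0"
    by (rule LIMSEQ_Suc, rule lim_const_over_n)
  then have "(\<lambda>n. t * exp (- t\<^sup>2 / real (Suc n))) \<longlonglongrightarrow> t * exp 0"
    by (intro tendsto_intros)
  then show ?thesis by (simp add: damp_def add.commute)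
qed

lemma smooth_damp: "smooth f \<Longrightarrow> smooth (\<lambda>x. damp N (f x))"
  unfolding damp_def
  by (intro smooth_mult smooth_exp)
    (auto intro: smooth_cmult[of "\<lambda>x. f x * f x" "-1/N", simplified] smooth_mult
      simp: power2_eq_square)

lemma norm_grad_damp_le:
  assumes "smooth f" "0 < N"
  shows "norm (grad (\<lambda>x. damp N (f x)) x) \<le> norm (grad f x)"
proof -
  have "grad (\<lambda>x. damp N (f x)) x = ((1 - 2 * (f x)\<^sup>2 / N) * exp (- (f x)\<^sup>2 / N)) *\<^sub>R grad f x"
    using assms by (intro grad_compose damp_has_real_derivative smooth_differentiable) auto
  then show ?thesis
    using abs_damp_derivative_le[OF assms(2), of "f x"] by (simp add: mult_left_le_one_le)
qed

lemma grad_conjugate: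
  assumes "smooth g" "smooth U"
  shows "grad (\<lambda>x. (g x - c) * exp (- U x / 2)) x =
    exp (- U x / 2) *\<^sub>R grad g x - ((g x - c) * exp (- U x / 2) / 2) *\<^sub>R grad U x"
proof (rule grad_eqI)
  note D = has_derivative_grad[OF smooth_differentiable[OF assms(1)]]
    has_derivative_grad[OF smooth_differentiable[OF assms(2)]]
  have "((\<lambda>x. (g x - c) * exp (- U x / 2)) has_derivative
     (\<lambda>v. (g x - c) * ((- (grad U x \<bullet> v) / 2) * exp (- U x / 2)) + (grad g x \<bullet> v) * exp (- U x / 2))) (at x)"
    by (auto intro!: derivative_eq_intros D simp: field_simps fun_eq_iff)
  then show "((\<lambda>x. (g x - c) * exp (- U x / 2)) has_derivative
     (\<lambda>v. (exp (- U x / 2) *\<^sub>R grad g x - ((g x - c) * exp (- U x / 2) / 2) *\<^sub>R grad U x) \<bullet> v)) (at x)"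
    by (rule has_derivative_eq_rhs) (auto simp: algebra_simps inner_diff_left fun_eq_iff)
qed

lemma smooth_conjugate: "smooth g \<Longrightarrow> smooth U \<Longrightarrow> smooth (\<lambda>x. (g x - c) * exp (- U x / 2))"
  by (intro smooth_mult smooth_diff smooth_const smooth_exp)
    (auto dest: smooth_cmult[of _ "-1/2"] simp: field_simps)

lemma grad_conjugate_bound:
  assumes g: "smooth g" and U: "smooth U" and \<epsilon>: "\<epsilon> > 0" and C: "C \<ge> 0"
    and s: "C * (1 + \<epsilon>) / 4 * (norm (grad U x))\<^sup>2 * (w x)\<^sup>2 \<le> s"
  shows "C * ((norm (grad (\<lambda>x. (g x - c) * exp (- U x / 2)) x))\<^sup>2 * (w x)\<^sup>2)
    \<le> (1 + 1/\<epsilon>) * C * (exp (- U x) * ((norm (grad g x))\<^sup>2 * (w x)\<^sup>2)) + s * (exp (- U x) * (g x - c)\<^sup>2)"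
proof -
  define E where "E = exp (- U x / 2)"
  have E_sq: "E\<^sup>2 = exp (- U x)" unfolding E_def by (simp add: power2_eq_square exp_add[symmetric])
  let ?a = "E *\<^sub>R grad g x" and ?b = "((g x - c) * E / 2) *\<^sub>R grad U x"
  have a: "(norm ?a)\<^sup>2 = E\<^sup>2 * (norm (grad g x))\<^sup>2" by (simp add: E_def power_mult_distrib)
  have b: "(norm ?b)\<^sup>2 = (g x - c)\<^sup>2 * E\<^sup>2 / 4 * (norm (grad U x))\<^sup>2"
    by (simp add: power_mult_distrib power_divide power2_abs)
  have "C * ((norm (?a - ?b))\<^sup>2 * (w x)\<^sup>2) = (C * (w x)\<^sup>2) * (norm (?a - ?b))\<^sup>2" by simp
  also have "\<dots> \<le> (C * (w x)\<^sup>2) * ((1 + 1/\<epsilon>) * (norm ?a)\<^sup>2 + (1 + \<epsilon>) * (norm ?b)\<^sup>2)"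
    using C by (intro mult_left_mono Young_norm_diff \<epsilon>) simp
  also have "\<dots> = (1 + 1/\<epsilon>) * C * (E\<^sup>2 * ((norm (grad g x))\<^sup>2 * (w x)\<^sup>2))
      + (E\<^sup>2 * (g x - c)\<^sup>2) * (C * (1 + \<epsilon>) / 4 * (norm (grad U x))\<^sup>2 * (w x)\<^sup>2)"
    unfolding a b by (simp add: algebra_simps)
  also have "\<dots> \<le> (1 + 1/\<epsilon>) * C * (E\<^sup>2 * ((norm (grad g x))\<^sup>2 * (w x)\<^sup>2)) + (E\<^sup>2 * (g x - c)\<^sup>2) * s"
    by (intro add_left_mono mult_left_mono s) simp
  finally show ?thesis
    unfolding grad_conjugate[OF g U] E_def[symmetric] E_sq by (simp add: mult.commute)
qed

lemma Var_le_nn_integral_power2_diff: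
  assumes M: "prob_space M" and [measurable]: "f \<in> borel_measurable M"
  shows "Var M f \<le> (\<integral>\<^sup>+ x. ennreal ((f x - c)\<^sup>2) \<partial>M)"
proof (cases "(\<integral>\<^sup>+ x. ennreal ((f x - c)\<^sup>2) \<partial>M) = \<infinity>")
  case False
  interpret prob_space M by (rule M)
  define g where "g x = f x - c" for x
  have [measurable]: "g \<in> borel_measurable M" unfolding g_def[abs_def] by measurable
  have g2: "integrable M (\<lambda>x. (g x)\<^sup>2)"
    using False by (subst integrable_iff_bounded) (simp add: g_def top.not_eq_extremum)
  have g: "integrable M g" by (rule square_integrable_imp_integrable[OF _ g2]) simp
  have "expectation f = expectation (\<lambda>x. g x + c)" by (simp add: g_def)
  also have "\<dots> = expectation g + c"
    using g by (subst Bochner_Integration.integral_add) (auto simp: prob_space)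
  finally have "expectation f = expectation g + c" .
  then have "Var M f = (\<integral>\<^sup>+ x. ennreal ((g x - expectation g)\<^sup>2) \<partial>M)"
    unfolding Var_def by (simp add: g_def algebra_simps)
  also have "\<dots> = ennreal (variance g)"
  proof (rule nn_integral_eq_integral)
    show "integrable M (\<lambda>x. (g x - expectation g)\<^sup>2)"
      using g g2 unfolding power2_diff by (intro Bochner_Integration.integrable_diff) auto
  qed simp
  also have "variance g = expectation (\<lambda>x. (g x)\<^sup>2) - (expectation g)\<^sup>2"
    by (rule variance_eq[OF g g2])
  also have "ennreal \<dots> \<le> ennreal (expectation (\<lambda>x. (g x)\<^sup>2))" by (intro ennreal_leI) simp
  also have "\<dots> = (\<integral>\<^sup>+ x. ennreal ((g x)\<^sup>2) \<partial>M)"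
    by (rule nn_integral_eq_integral[symmetric]) (use g2 in auto)
  finally show ?thesis unfolding g_def .
qed simp

lemma ennreal_le_absorb:
  fixes X A :: ennreal and a s :: real
  assumes "X < \<infinity>" "X \<le> ennreal a * A + ennreal s * X" "0 \<le> a" "0 \<le> s" "s < 1"
  shows "X \<le> ennreal (a / (1 - s)) * A"
proof -
  obtain x where x: "X = ennreal x" "0 \<le> x" using assms(1) by (cases X) auto
  show ?thesis
  proof (cases "A = \<infinity>")
    case True
    show ?thesis
    proof (cases "a = 0")
      case True
      then have "ennreal x \<le> ennreal (s * x)" using assms(2,4) x by (simp add: ennreal_mult)
      then have "x \<le> s * x" using assms(4) x by (simp add: ennreal_le_iff)
      then have "x = 0" using x assms(5) by (smt (verit) mult_le_cancel_right1)
      then show ?thesis using x by simp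
    next
      case False
      then show ?thesis using \<open>A = \<infinity>\<close> assms(3,5) by (simp add: ennreal_mult_top)
    qed
  next
    case False
    then obtain y where y: "A = ennreal y" "0 \<le> y" by (cases A) auto
    have "ennreal x \<le> ennreal (a * y + s * x)"
      using assms(2-4) x y by (simp add: ennreal_mult'' ennreal_plus[symmetric])
    then have "x \<le> a * y + s * x"
      using x y assms(3,4) by (subst (asm) ennreal_le_iff) auto
    then have "x \<le> a / (1 - s) * y" using assms(5) by (simp add: field_simps)
    then show ?thesis using x y assms(3-5) by (simp add: ennreal_mult''[symmetric] ennreal_leI)
  qed
qed

lemma nn_integral_density_prob_space:
  assumes "prob_space (density M f)" "f \<in> borel_measurable M"
  shows "(\<integral>\<^sup>+ x. f x \<partial>M) = 1"
  using prob_space.emeasure_space_1[OF assms(1)] assms(2)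
  by (simp add: emeasure_density)

lemma exists_weighted_integral_eq_0:
  fixes E g :: "'a \<Rightarrow> real"
  assumes "prob_space M" "integrable M E" "integrable M (\<lambda>x. g x * E x)" "\<And>x. 0 < E x"
  shows "\<exists>c. (\<integral>x. (g x - c) * E x \<partial>M) = 0"
proof
  have "\<not> (AE x in M. E x = 0)"
  proof
    assume "AE x in M. E x = 0"
    then have "AE x in M. False" using assms(4) by (auto elim: eventually_mono simp: less_le)
    then show False using prob_space.AE_False[OF assms(1)] by simp
  qed
  then have "(\<integral>x. E x \<partial>M) \<noteq> 0"
    using integral_nonneg_eq_0_iff_AE[OF assms(2)] assms(4) by (simp add: less_imp_le)
  then show "(\<integral>x. (g x - (\<integral>x. g x * E x \<partial>M) / (\<integral>x. E x \<partial>M)) * E x \<partial>M) = 0"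
    using assms(2,3) by (simp add: left_diff_distrib)
qed

lemma nn_integral_grad_conjugate_le:
  fixes \<nu> :: "'a::euclidean_space measure"
  assumes [measurable_cong]: "sets \<nu> = sets borel"
    and g: "smooth g" and U: "smooth U" and [measurable]: "w \<in> borel_measurable borel"
    and \<epsilon>: "\<epsilon> > 0" and C: "C \<ge> 0"
    and s: "\<And>x. C * (1 + \<epsilon>) / 4 * (norm (grad U x))\<^sup>2 * (w x)\<^sup>2 \<le> s" "0 \<le> s"
  shows "ennreal C * (\<integral>\<^sup>+ x. ennreal ((norm (grad (\<lambda>x. (g x - c) * exp (- U x / 2)) x))\<^sup>2 * (w x)\<^sup>2) \<partial>\<nu>)
    \<le> ennreal ((1 + 1/\<epsilon>) * C) *
        (\<integral>\<^sup>+ x. ennreal ((norm (grad g x))\<^sup>2 * (w x)\<^sup>2) \<partial>density \<nu> (\<lambda>x. ennreal (exp (- U x))))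
      + ennreal s * (\<integral>\<^sup>+ x. ennreal ((g x - c)\<^sup>2) \<partial>density \<nu> (\<lambda>x. ennreal (exp (- U x))))"
    (is "_ \<le> ennreal ?a * _ + _")
proof -
  define h where "h = (\<lambda>x. (g x - c) * exp (- U x / 2))"
  have [measurable]: "grad h \<in> borel_measurable borel"
    unfolding h_def by (rule borel_measurable_grad[OF smooth_conjugate[OF g U]])
  note [measurable] = borel_measurable_smooth[OF g] borel_measurable_grad[OF g]
    borel_measurable_smooth[OF U]
  have a: "0 \<le> ?a" using \<epsilon> C by simp
  have "ennreal C * (\<integral>\<^sup>+ x. ennreal ((norm (grad h x))\<^sup>2 * (w x)\<^sup>2) \<partial>\<nu>)
      = (\<integral>\<^sup>+ x. ennreal C * ennreal ((norm (grad h x))\<^sup>2 * (w x)\<^sup>2) \<partial>\<nu>)"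
    by (rule nn_integral_cmult[symmetric]) measurable
  also have "\<dots> = (\<integral>\<^sup>+ x. ennreal (C * ((norm (grad h x))\<^sup>2 * (w x)\<^sup>2)) \<partial>\<nu>)"
    using C by (simp add: ennreal_mult)
  also have "\<dots> \<le> (\<integral>\<^sup>+ x. ennreal ?a * (ennreal (exp (- U x)) * ennreal ((norm (grad g x))\<^sup>2 * (w x)\<^sup>2))
      + ennreal s * (ennreal (exp (- U x)) * ennreal ((g x - c)\<^sup>2)) \<partial>\<nu>)"
  proof (rule nn_integral_mono)
    fix x
    have "ennreal (C * ((norm (grad h x))\<^sup>2 * (w x)\<^sup>2))
        \<le> ennreal (?a * (exp (- U x) * ((norm (grad g x))\<^sup>2 * (w x)\<^sup>2)) + s * (exp (- U x) * (g x - c)\<^sup>2))"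
      unfolding h_def by (intro ennreal_leI grad_conjugate_bound g U \<epsilon> C s)
    also have "\<dots> = ennreal ?a * (ennreal (exp (- U x)) * ennreal ((norm (grad g x))\<^sup>2 * (w x)\<^sup>2))
        + ennreal s * (ennreal (exp (- U x)) * ennreal ((g x - c)\<^sup>2))"
      using a s(2) by (subst ennreal_plus) (auto simp: ennreal_mult)
    finally show "ennreal (C * ((norm (grad h x))\<^sup>2 * (w x)\<^sup>2))
        \<le> ennreal ?a * (ennreal (exp (- U x)) * ennreal ((norm (grad g x))\<^sup>2 * (w x)\<^sup>2))
          + ennreal s * (ennreal (exp (- U x)) * ennreal ((g x - c)\<^sup>2))" .
  qed
  also have "\<dots> = ennreal ?a * (\<integral>\<^sup>+ x. ennreal (exp (- U x)) * ennreal ((norm (grad g x))\<^sup>2 * (w x)\<^sup>2) \<partial>\<nu>)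
      + ennreal s * (\<integral>\<^sup>+ x. ennreal (exp (- U x)) * ennreal ((g x - c)\<^sup>2) \<partial>\<nu>)"
    by (simp add: nn_integral_add nn_integral_cmult)
  finally show ?thesis unfolding h_def by (simp add: nn_integral_density)
qed

lemma perturbed_poincare_bounded:
  fixes \<nu> :: "'a::euclidean_space measure" and U g w :: "'a \<Rightarrow> real"
  defines "\<mu> \<equiv> density \<nu> (\<lambda>x. ennreal (exp (- U x)))"
  assumes sets: "sets \<nu> = sets borel" and \<nu>: "prob_space \<nu>" and \<mu>: "prob_space \<mu>"
    and U: "smooth U" and g: "smooth g" and g_bounded: "\<And>x. \<bar>g x\<bar> \<le> m"
    and w: "w \<in> borel_measurable borel"
    and C: "C \<ge> 0" and P: "weighted_poincare \<nu> w C"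
    and \<epsilon>: "\<epsilon> > 0" and s: "\<And>x. C * (1 + \<epsilon>) / 4 * (norm (grad U x))\<^sup>2 * (w x)\<^sup>2 \<le> s"
    "0 \<le> s" "s < 1"
  shows "\<exists>c. (\<integral>\<^sup>+ x. ennreal ((g x - c)\<^sup>2) \<partial>\<mu>)
     \<le> ennreal ((1 + 1/\<epsilon>) * C / (1 - s)) * (\<integral>\<^sup>+ x. ennreal ((norm (grad g x))\<^sup>2 * (w x)\<^sup>2) \<partial>\<mu>)"
proof -
  interpret \<nu>: prob_space \<nu> by (rule \<nu>)
  note [measurable_cong] = sets
  note [measurable] = borel_measurable_smooth[OF U] borel_measurable_smooth[OF g]
  define E where "E x = exp (- U x / 2)" for x
  have E_pos: "0 < E x" for x unfolding E_def by simp
  have E_sq: "(E x)\<^sup>2 = exp (- U x)" for x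
    unfolding E_def by (simp add: power2_eq_square exp_add[symmetric])
  have [measurable]: "E \<in> borel_measurable borel" unfolding E_def[abs_def] by measurable
  have E_sq_meas: "(\<lambda>x. (E x)\<^sup>2) \<in> borel_measurable \<nu>" by measurable
  have E_sq_one: "(\<integral>\<^sup>+ x. ennreal ((E x)\<^sup>2) \<partial>\<nu>) = ennreal 1"
    unfolding E_sq ennreal_1
    by (rule nn_integral_density_prob_space[OF \<mu>[unfolded \<mu>_def]]) measurable
  have "integrable \<nu> (\<lambda>x. (E x)\<^sup>2)"
    by (rule integrableI_nn_integral_finite[OF E_sq_meas _ E_sq_one]) simp
  then have E_int: "integrable \<nu> E" by (rule \<nu>.square_integrable_imp_integrable[rotated]) measurable
  have gE_int: "integrable \<nu> (\<lambda>x. g x * E x)"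
  proof (rule Bochner_Integration.integrable_bound[of _ "\<lambda>x. m * E x"])
    show "AE x in \<nu>. norm (g x * E x) \<le> norm (m * E x)"
      using order_trans[OF g_bounded abs_ge_self] by (simp add: abs_mult mult_right_mono)
  qed (use E_int in auto)
  obtain c where mean_0: "(\<integral>x. (g x - c) * E x \<partial>\<nu>) = 0"
    using exists_weighted_integral_eq_0[OF \<nu> E_int gE_int E_pos] by blast
  define h where "h x = (g x - c) * E x" for x
  define X where "X = (\<integral>\<^sup>+ x. ennreal ((g x - c)\<^sup>2) \<partial>\<mu>)"
  have "X = Var \<nu> h"
    using mean_0 unfolding X_def Var_def \<mu>_def h_def
    by (subst nn_integral_density)
      (auto simp: ennreal_mult''[symmetric] E_sq[symmetric] power_mult_distrib mult.commute)
  also have "\<dots> \<le> ennreal C * (\<integral>\<^sup>+ x. ennreal ((norm (grad h x))\<^sup>2 * (w x)\<^sup>2) \<partial>\<nu>)"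
    using P smooth_conjugate[OF g U] unfolding weighted_poincare_def h_def E_def by blast
  also have "\<dots> \<le> ennreal ((1 + 1/\<epsilon>) * C) * (\<integral>\<^sup>+ x. ennreal ((norm (grad g x))\<^sup>2 * (w x)\<^sup>2) \<partial>\<mu>)
      + ennreal s * X"
    unfolding h_def E_def X_def \<mu>_def by (rule nn_integral_grad_conjugate_le[OF sets g U w \<epsilon> C s(1,2)])
  finally have "X \<le> ennreal ((1 + 1/\<epsilon>) * C) * (\<integral>\<^sup>+ x. ennreal ((norm (grad g x))\<^sup>2 * (w x)\<^sup>2) \<partial>\<mu>)
      + ennreal s * X" .
  moreover have "X < \<infinity>"
  proof -
    have "X \<le> (\<integral>\<^sup>+ x. ennreal ((m + \<bar>c\<bar>)\<^sup>2) \<partial>\<mu>)"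
      unfolding X_def using g_bounded
      by (intro nn_integral_mono ennreal_leI power2_le_iff_abs_le[THEN iffD2])
        (auto intro: abs_triangle_ineq4[THEN order_trans] add_nonneg_nonneg order_trans[OF abs_ge_zero g_bounded])
    also have "\<dots> < \<infinity>" using prob_space.emeasure_space_1[OF \<mu>] by simp
    finally show ?thesis .
  qed
  ultimately have "X \<le> ennreal ((1 + 1/\<epsilon>) * C / (1 - s)) *
      (\<integral>\<^sup>+ x. ennreal ((norm (grad g x))\<^sup>2 * (w x)\<^sup>2) \<partial>\<mu>)"
    using \<epsilon> C s(2,3) by (intro ennreal_le_absorb) auto
  then show ?thesis unfolding X_def by blast
qed

lemma bounded_range_centers:
  fixes F :: "nat \<Rightarrow> 'a \<Rightarrow> real" and c :: "nat \<Rightarrow> real"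
  assumes M: "prob_space M"
    and [measurable]: "f \<in> borel_measurable M" "\<And>n. F n \<in> borel_measurable M"
    and F: "\<And>n x. \<bar>F n x\<bar> \<le> \<bar>f x\<bar>"
    and b: "0 \<le> b" "\<And>n. (\<integral>\<^sup>+ x. ennreal ((F n x - c n)\<^sup>2) \<partial>M) \<le> ennreal b"
  shows "bounded (range c)"
proof -
  interpret prob_space M by (rule M)
  txt \<open>Integrating \<open>c\<^sub>n\<^sup>2 \<le> (1 + f\<^sup>2) (2 (F\<^sub>n - c\<^sub>n)\<^sup>2 + 2)\<close> against the weight
    \<open>1 / (1 + f\<^sup>2)\<close>, whose integral \<open>D\<close> is positive, bounds \<open>c\<^sub>n\<^sup>2 D\<close> uniformly.\<close>
  define D where "D = (\<integral>\<^sup>+ x. ennreal (1 / (1 + (f x)\<^sup>2)) \<partial>M)"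
  have "D \<le> (\<integral>\<^sup>+ x. 1 \<partial>M)"
    unfolding D_def by (intro nn_integral_mono) (simp add: add_pos_nonneg divide_le_eq_1)
  then have "D \<le> 1" by (simp add: emeasure_space_1)
  moreover have "D \<noteq> 0"
  proof
    assume "D = 0"
    then have "AE x in M. ennreal (1 / (1 + (f x)\<^sup>2)) = 0"
      unfolding D_def by (subst (asm) nn_integral_0_iff_AE) auto
    then have "AE x in M. False"
      by (rule eventually_mono) (simp, metis add_pos_nonneg zero_le_power2 zero_less_one less_irrefl)
    then show False by simp
  qed
  ultimately obtain d where d: "D = ennreal d" "0 < d"
    by (cases D) (auto simp: top_unique)
  have center_bound: "(c n)\<^sup>2 / (1 + (f x)\<^sup>2) \<le> 2 * (F n x - c n)\<^sup>2 + 2" for n x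
  proof -
    have "(F n x)\<^sup>2 \<le> (f x)\<^sup>2" using F[of n x] by (simp add: abs_le_square_iff)
    then have "(c n)\<^sup>2 \<le> 2 * (F n x - c n)\<^sup>2 + 2 * (f x)\<^sup>2"
      using zero_le_power2[of "2 * F n x - c n"] by (simp add: power2_eq_square algebra_simps)
    also have "\<dots> \<le> (2 * (F n x - c n)\<^sup>2 + 2) * (1 + (f x)\<^sup>2)"
      by (simp add: algebra_simps)
    finally show ?thesis by (simp add: add_pos_nonneg pos_divide_le_eq)
  qed
  have c_sq: "(c n)\<^sup>2 * d \<le> 2 * b + 2" for n
  proof -
    have "ennreal ((c n)\<^sup>2 * d) = ennreal ((c n)\<^sup>2) * D"
      using d by (simp add: ennreal_mult)
    also have "\<dots> = (\<integral>\<^sup>+ x. ennreal ((c n)\<^sup>2) * ennreal (1 / (1 + (f x)\<^sup>2)) \<partial>M)"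
      unfolding D_def by (rule nn_integral_cmult[symmetric]) simp
    also have "\<dots> = (\<integral>\<^sup>+ x. ennreal ((c n)\<^sup>2 / (1 + (f x)\<^sup>2)) \<partial>M)"
      by (intro nn_integral_cong) (simp add: ennreal_mult[symmetric] add_pos_nonneg)
    also have "\<dots> \<le> (\<integral>\<^sup>+ x. 2 * ennreal ((F n x - c n)\<^sup>2) + 2 \<partial>M)"
    proof (intro nn_integral_mono)
      fix x
      have "ennreal (2 * (F n x - c n)\<^sup>2 + 2) = 2 * ennreal ((F n x - c n)\<^sup>2) + 2"
        by (simp add: ennreal_plus ennreal_mult)
      then show "ennreal ((c n)\<^sup>2 / (1 + (f x)\<^sup>2)) \<le> 2 * ennreal ((F n x - c n)\<^sup>2) + 2"
        using ennreal_leI[OF center_bound[of n x]] by simp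
    qed
    also have "\<dots> = 2 * (\<integral>\<^sup>+ x. ennreal ((F n x - c n)\<^sup>2) \<partial>M) + 2"
      by (subst nn_integral_add) (auto simp: nn_integral_cmult emeasure_space_1)
    also have "\<dots> \<le> 2 * ennreal b + 2" using b(2) by (intro add_right_mono mult_left_mono) auto
    also have "\<dots> = ennreal (2 * b + 2)" using b(1) by (simp add: ennreal_mult ennreal_plus)
    finally show ?thesis using b(1) by (subst (asm) ennreal_le_iff) auto
  qed
  have "\<bar>c n\<bar> \<le> 1 + (2 * b + 2) / d" for n
  proof -
    have "\<bar>c n\<bar> \<le> 1 + (c n)\<^sup>2"
      using zero_le_power2[of "\<bar>c n\<bar> - 1/2"] by (simp add: power2_eq_square algebra_simps)
    also have "(c n)\<^sup>2 \<le> (2 * b + 2) / d" using c_sq[of n] d(2) by (simp add: pos_le_divide_eq)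
    finally show ?thesis by simp
  qed
  then show ?thesis unfolding bounded_iff by auto
qed

lemma exists_center_of_limit:
  fixes F :: "nat \<Rightarrow> 'a \<Rightarrow> real" and c :: "nat \<Rightarrow> real"
  assumes [measurable]: "\<And>n. F n \<in> borel_measurable M"
    and F: "\<And>x. (\<lambda>n. F n x) \<longlonglongrightarrow> f x" and c: "bounded (range c)"
    and B: "\<And>n. (\<integral>\<^sup>+ x. ennreal ((F n x - c n)\<^sup>2) \<partial>M) \<le> B"
  shows "\<exists>c0. (\<integral>\<^sup>+ x. ennreal ((f x - c0)\<^sup>2) \<partial>M) \<le> B"
proof -
  obtain c0 r where r: "strict_mono r" and c0: "(c \<circ> r) \<longlonglongrightarrow> c0"
    using bounded_imp_convergent_subsequence[OF c] by blast
  have lim: "(\<lambda>k. ennreal ((F (r k) x - c (r k))\<^sup>2)) \<longlonglongrightarrow> ennreal ((f x - c0)\<^sup>2)" for x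
    using LIMSEQ_subseq_LIMSEQ[OF F r] c0
    by (intro tendsto_ennrealI tendsto_intros) (auto simp: o_def)
  have "(\<integral>\<^sup>+ x. ennreal ((f x - c0)\<^sup>2) \<partial>M) =
      (\<integral>\<^sup>+ x. liminf (\<lambda>k. ennreal ((F (r k) x - c (r k))\<^sup>2)) \<partial>M)"
    by (intro nn_integral_cong) (rule lim_imp_Liminf[OF trivial_limit_sequentially lim, symmetric])
  also have "\<dots> \<le> liminf (\<lambda>k. \<integral>\<^sup>+ x. ennreal ((F (r k) x - c (r k))\<^sup>2) \<partial>M)"
    by (rule nn_integral_liminf) simp
  also have "\<dots> \<le> B" using B by (intro Liminf_le) auto
  finally show ?thesis by blast
qed

lemma weighted_poincare_if_bounded:
  fixes M :: "'a::euclidean_space measure"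
  assumes M: "prob_space M" and sets: "sets M = sets borel"
    and bounded_case: "\<And>g m. smooth g \<Longrightarrow> (\<And>x. \<bar>g x\<bar> \<le> m) \<Longrightarrow>
      \<exists>c. (\<integral>\<^sup>+ x. ennreal ((g x - c)\<^sup>2) \<partial>M)
        \<le> ennreal K * (\<integral>\<^sup>+ x. ennreal ((norm (grad g x))\<^sup>2 * (w x)\<^sup>2) \<partial>M)"
  shows "weighted_poincare M w K"
  unfolding weighted_poincare_def
proof (intro allI impI)
  fix f :: "'a \<Rightarrow> real" assume f: "smooth f"
  define F where "F n x = damp (real n + 1) (f x)" for n x
  have F_smooth: "smooth (F n)" for n unfolding F_def by (rule smooth_damp[OF f])
  have f_meas: "f \<in> borel_measurable M" and F_meas: "F n \<in> borel_measurable M" for n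
    using borel_measurable_smooth[OF f] borel_measurable_smooth[OF F_smooth]
    by (simp_all add: measurable_cong_sets[OF sets refl])
  define A where "A = ennreal K * (\<integral>\<^sup>+ x. ennreal ((norm (grad f x))\<^sup>2 * (w x)\<^sup>2) \<partial>M)"
  show "Var M f \<le> A"
  proof (cases "A = \<infinity>")
    case False
    then obtain b where b: "A = ennreal b" "0 \<le> b" by (cases A) auto
    have "\<exists>c. (\<integral>\<^sup>+ x. ennreal ((F n x - c)\<^sup>2) \<partial>M) \<le> ennreal b" for n
    proof -
      obtain c where "(\<integral>\<^sup>+ x. ennreal ((F n x - c)\<^sup>2) \<partial>M)
          \<le> ennreal K * (\<integral>\<^sup>+ x. ennreal ((norm (grad (F n) x))\<^sup>2 * (w x)\<^sup>2) \<partial>M)"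
        using bounded_case[OF F_smooth, of n "real n + 1"] abs_damp_le_bound unfolding F_def by auto
      also have "\<dots> \<le> A"
        unfolding A_def F_def using norm_grad_damp_le[OF f]
        by (intro mult_left_mono nn_integral_mono ennreal_leI mult_right_mono power_mono) auto
      finally show ?thesis unfolding b by blast
    qed
    then obtain c where c: "\<And>n. (\<integral>\<^sup>+ x. ennreal ((F n x - c n)\<^sup>2) \<partial>M) \<le> ennreal b" by metis
    have "bounded (range c)"
      by (rule bounded_range_centers[OF M f_meas F_meas _ b(2) c]) (simp add: F_def abs_damp_le)
    then obtain c0 where "(\<integral>\<^sup>+ x. ennreal ((f x - c0)\<^sup>2) \<partial>M) \<le> ennreal b"
      using exists_center_of_limit[where F = F and f = f, OF F_meas _ _ c]
      by (auto simp: F_def damp_tendsto)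
    then show ?thesis
      using Var_le_nn_integral_power2_diff[OF M f_meas, of c0] b(1) by simp
  qed simp
qed

lemma weighted_poincare_density_exp:
  fixes \<nu> :: "'a::euclidean_space measure" and U w :: "'a \<Rightarrow> real"
  assumes "sets \<nu> = sets borel" "prob_space \<nu>" "prob_space (density \<nu> (\<lambda>x. ennreal (exp (- U x))))"
    and "smooth U" "w \<in> borel_measurable borel" "C \<ge> 0" "weighted_poincare \<nu> w C"
    and "\<epsilon> > 0" "\<And>x. C * (1 + \<epsilon>) / 4 * (norm (grad U x))\<^sup>2 * (w x)\<^sup>2 \<le> s" "0 \<le> s" "s < 1"
  shows "weighted_poincare (density \<nu> (\<lambda>x. ennreal (exp (- U x)))) w ((1 + 1/\<epsilon>) * C / (1 - s))"
proof (rule weighted_poincare_if_bounded)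
  fix g :: "'a \<Rightarrow> real" and m assume "smooth g" "\<And>x. \<bar>g x\<bar> \<le> m"
  then show "\<exists>c. (\<integral>\<^sup>+ x. ennreal ((g x - c)\<^sup>2) \<partial>density \<nu> (\<lambda>x. ennreal (exp (- U x))))
      \<le> ennreal ((1 + 1/\<epsilon>) * C / (1 - s)) *
        (\<integral>\<^sup>+ x. ennreal ((norm (grad g x))\<^sup>2 * (w x)\<^sup>2) \<partial>density \<nu> (\<lambda>x. ennreal (exp (- U x))))"
    by (rule perturbed_poincare_bounded[OF assms(1-4) _ _ assms(5-11)])
qed (use assms(1,3) in auto)

lemma density_exp_add:
  assumes [measurable]: "U \<in> borel_measurable M" "W \<in> borel_measurable M"
  shows "density (density M (\<lambda>x. ennreal (exp (- W x)))) (\<lambda>x. ennreal (exp (- U x)))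
    = density M (\<lambda>x. ennreal (exp (- (U x + W x))))"
  by (subst density_density_eq) (auto simp: ennreal_mult[symmetric] exp_add[symmetric] add.commute)

theorem proposition3p2:
  fixes U W w :: "'a::euclidean_space \<Rightarrow> real" and C \<epsilon> :: real
  assumes "smooth U" and "smooth W"
    and "prob_space (density lborel (\<lambda>x. ennreal (exp (- W x))))"
    and "prob_space (density lborel (\<lambda>x. ennreal (exp (- (U x + W x)))))"
    and "\<forall>x. w x \<ge> 0" and "w \<in> borel_measurable borel"
    and "C \<ge> 0"
    and "weighted_poincare (density lborel (\<lambda>x. ennreal (exp (- W x)))) w C"
    and "\<epsilon> > 0"
    and "bdd_above (range (\<lambda>x. C * (1 + \<epsilon>) / 4 * (norm (grad U x))\<^sup>2 * (w x)\<^sup>2))"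
    and "(SUP x. C * (1 + \<epsilon>) / 4 * (norm (grad U x))\<^sup>2 * (w x)\<^sup>2) < 1"
  shows "weighted_poincare (density lborel (\<lambda>x. ennreal (exp (- (U x + W x))))) w
           ((1 + 1 / \<epsilon>) * C /
            (1 - (SUP x. C * (1 + \<epsilon>) / 4 * (norm (grad U x))\<^sup>2 * (w x)\<^sup>2)))"
proof -
  define s where "s = (SUP x. C * (1 + \<epsilon>) / 4 * (norm (grad U x))\<^sup>2 * (w x)\<^sup>2)"
  have s_upper: "C * (1 + \<epsilon>) / 4 * (norm (grad U x))\<^sup>2 * (w x)\<^sup>2 \<le> s" for x
    unfolding s_def using assms(10) by (rule cSUP_upper[OF UNIV_I])
  have "0 \<le> C * (1 + \<epsilon>) / 4 * (norm (grad U 0))\<^sup>2 * (w 0)\<^sup>2" using assms(7,9) by simp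
  then have "0 \<le> s" using s_upper by (rule order_trans)
  have s_less_1: "s < 1" using assms(11) unfolding s_def .
  have \<mu>_eq: "density lborel (\<lambda>x. ennreal (exp (- (U x + W x))))
      = density (density lborel (\<lambda>x. ennreal (exp (- W x)))) (\<lambda>x. ennreal (exp (- U x)))"
    using borel_measurable_smooth[OF assms(1)] borel_measurable_smooth[OF assms(2)]
    by (simp add: density_exp_add)
  show ?thesis
    unfolding s_def[symmetric] \<mu>_eq
  proof (rule weighted_poincare_density_exp[OF _ assms(3) _ assms(1,6-9) s_upper \<open>0 \<le> s\<close> s_less_1])
    show "prob_space (density (density lborel (\<lambda>x. ennreal (exp (- W x)))) (\<lambda>x. ennreal (exp (- U x))))"
      using assms(4) unfolding \<mu>_eq .
  qed simp
qed

end
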